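(* Let $\mathbb{X},\mathbb{Y}$ be finite-dimensional real Hilbert spaces, $f:\mathbb{X}\to(-\infty,\infty]$ and $g:\mathbb{Y}\to(-\infty,\infty]$ proper, convex and lower semicontinuous, $K:\mathbb{X}\to\mathbb{Y}$ linear, and $h:\mathbb{X}\to\mathbb{R}$ convex and differentiable with $\bar L$-Lipschitz gradient. Assume (A1) below holds. Let $(\bar x,\bar w,\bar y)\in\mathbf{\Omega}$ and let $\{(z_n,x_n,w_n,y_n,\tau_n)\}$ be generated by the P-GRPDA algorithm described in the context. Then for any $y\in\mathbb{Y}$ there exists a natural number $n_2$ such that for all $n\ge n_2$, $$2\tau_n\mathbb{J}(x_n,w_n,y)+\frac{\psi}{\psi-1}\|\bar x-z_{n+2}\|^2+\frac1\beta\|y-y_n\|^2+\mu'\|x_n-x_{n+1}\|^2\le \frac{\psi}{\psi-1}\|\bar x-z_{n+1}\|^2+\frac1\beta\|y-y_{n-1}\|^2+\mu'\|x_n-x_{n-1}\|^2-\psi\bar\theta_n\|x_n-z_{n+1}\|^2,$$ where $\bar\theta_n=\tau_n/\tau_{n-1}$.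
   Context: $\phi=\frac{1+\sqrt5}{2}$; $K^*$ adjoint of $K$; $g^*$ Fenchel conjugate of $g$; $\operatorname{prox}_{\lambda f}(x)=\arg\min_{u}\{f(u)+\frac{1}{2\lambda}\|u-x\|^2\}$. (A1): the saddle point problem $\min_{x}\max_{y}\mathbb{L}(x,y):=f(x)+h(x)+\langle Kx,y\rangle-g^*(y)$ has a nonempty solution set, and $0\in\operatorname{ri}(K(\operatorname{dom}f)-\operatorname{dom}g)$ (ri = relative interior). (The paper also assumes the proximal maps of $f,g$ are efficiently computable.) $\Phi(x,w):=f(x)+h(x)+g(w)$; $\mathbf{\Omega}:=\{(\bar x,\bar w,\bar y)\in\mathbb{X}\times\mathbb{Y}\times\mathbb{Y}: -K^*\bar y\in\partial f(\bar x)+\nabla h(\bar x),\ \bar y\in\partial g(\bar w),\ K\bar x=\bar w\}$; for the fixed $(\bar x,\bar w,\bar y)\in\mathbf{\Omega}$, $\mathbb{J}(x,w,y):=\Phi(x,w)+\langle y,Kx-w\rangle-\Phi(\bar x,\bar w)$. P-GRPDA: choose $x_0\in\mathbb{X}$, $y_0\in\mathbb{Y}$, set $z_0=x_0$, choose $\beta>0$, $\psi\in(1,\phi]$, $0<2\mu'<\mu<\psi/2$, $\tau_0>0$. For $n=1,2,\dots$: $z_n=\frac{\psi-1}{\psi}x_{n-1}+\frac1\psi z_{n-1}$; $x_n=\operatorname{prox}_{\tau_{n-1}f}\big(z_n-\tau_{n-1}K^*y_{n-1}-\tau_{n-1}\nabla h(x_{n-1})\big)$; $\tau_n=\min\left\{\tau_{n-1},\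 \frac{\mu\|x_n-x_{n-1}\|}{\sqrt\beta\|Kx_n-Kx_{n-1}\|},\ \frac{\mu'\|x_n-x_{n-1}\|}{\|\nabla h(x_n)-\nabla h(x_{n-1})\|}\right\}$, $\sigma_n=\beta\tau_n$; $w_n=\operatorname{prox}_{\frac{1}{\sigma_n}g}\big(\frac{y_{n-1}}{\sigma_n}+Kx_n\big)$; $y_n=y_{n-1}+\sigma_n(Kx_n-w_n)$. Conventions in the $\tau_n$ update: $1/0=\infty$ (a term with zero denominator and nonzero numerator is ignored) and $0/0=\infty$ (so $\tau_n=\tau_{n-1}$ if $x_n=x_{n-1}$). *)

theory Defs
  imports "HOL-Analysis.Analysis"
begin

definition edom :: "('a \<Rightarrow> ereal) \<Rightarrow> 'a set" where
  "edom f = {x. f x < \<infinity>}"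

definition proper_fun :: "('a \<Rightarrow> ereal) \<Rightarrow> bool" where
  "proper_fun f \<longleftrightarrow> (\<forall>x. f x \<noteq> -\<infinity>) \<and> (\<exists>x. f x \<noteq> \<infinity>)"

definition convex_efun :: "('a::real_vector \<Rightarrow> ereal) \<Rightarrow> bool" where
  "convex_efun f \<longleftrightarrow>
     (\<forall>x y t. 0 < t \<and> t < 1 \<longrightarrow>
        f ((1 - t) *\<^sub>R x + t *\<^sub>R y) \<le> ereal (1 - t) * f x + ereal t * f y)"

definition lsc_fun :: "('a::topological_space \<Rightarrow> ereal) \<Rightarrow> bool" where
  "lsc_fun f \<longleftrightarrow> (\<forall>x X. X \<longlonglongrightarrow> x \<longrightarrow> f x \<le> liminf (\<lambda>n. f (X n)))"

definition fconj :: "('a::real_inner \<Rightarrow> ereal) \<Rightarrow> 'a \<Rightarrow> ereal" where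
  "fconj g y = (SUP w. ereal (y \<bullet> w) - g w)"

definition subdiff :: "('a::real_inner \<Rightarrow> ereal) \<Rightarrow> 'a \<Rightarrow> 'a set" where
  "subdiff f x = {s. f x \<noteq> \<infinity> \<and> f x \<noteq> -\<infinity> \<and>
                     (\<forall>u. f x + ereal (s \<bullet> (u - x)) \<le> f u)}"

definition prox :: "real \<Rightarrow> ('a::real_normed_vector \<Rightarrow> ereal) \<Rightarrow> 'a \<Rightarrow> 'a" where
  "prox lam f v = (ARG_MIN (\<lambda>u. f u + ereal ((norm (u - v))\<^sup>2 / (2 * lam))) u. True)"

text \<open>Saddle point of L(x,y) = f x + h x + <Kx,y> - g*(y), with the usual
  conventions L = +inf for x outside dom f, L = -inf for y outside dom g*
  (for x in dom f).  Stated on the domains where L is real.\<close>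
definition saddle_point ::
  "('a::real_inner \<Rightarrow> ereal) \<Rightarrow> ('a \<Rightarrow> real) \<Rightarrow> ('a \<Rightarrow> 'b::real_inner) \<Rightarrow> ('b \<Rightarrow> ereal)
     \<Rightarrow> 'a \<Rightarrow> 'b \<Rightarrow> bool" where
  "saddle_point f h K g xs ys \<longleftrightarrow>
     xs \<in> edom f \<and> ys \<in> edom (fconj g) \<and>
     (\<forall>x\<in>edom f. \<forall>y\<in>edom (fconj g).
        f xs + ereal (h xs + K xs \<bullet> y) - fconj g y
          \<le> f xs + ereal (h xs + K xs \<bullet> ys) - fconj g ys \<and>
        f xs + ereal (h xs + K xs \<bullet> ys) - fconj g ys
          \<le> f x + ereal (h x + K x \<bullet> ys) - fconj g ys)"

definition A1 ::
  "('a::euclidean_space \<Rightarrow> ereal) \<Rightarrow> ('a \<Rightarrow> real) \<Rightarrow> ('a \<Rightarrow> 'b::euclidean_space) \<Rightarrow> ('b \<Rightarrow> ereal) \<Rightarrow> bool" where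
  "A1 f h K g \<longleftrightarrow>
     (\<exists>xs ys. saddle_point f h K g xs ys) \<and>
     0 \<in> rel_interior {K u - v | u v. u \<in> edom f \<and> v \<in> edom g}"

definition Omega ::
  "('a::euclidean_space \<Rightarrow> ereal) \<Rightarrow> ('a \<Rightarrow> 'a) \<Rightarrow> ('a \<Rightarrow> 'b::euclidean_space) \<Rightarrow> ('b \<Rightarrow> ereal)
     \<Rightarrow> ('a \<times> 'b \<times> 'b) set" where
  "Omega f gradh K g = {(xb, wb, yb).
      (\<exists>s\<in>subdiff f xb. - adjoint K yb = s + gradh xb) \<and> yb \<in> subdiff g wb \<and> K xb = wb}"

definition Phi :: "('a \<Rightarrow> ereal) \<Rightarrow> ('a \<Rightarrow> real) \<Rightarrow> ('b \<Rightarrow> ereal) \<Rightarrow> 'a \<Rightarrow> 'b \<Rightarrow> ereal" where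
  "Phi f h g x w = f x + ereal (h x) + g w"

definition JJ ::
  "('a \<Rightarrow> ereal) \<Rightarrow> ('a \<Rightarrow> real) \<Rightarrow> ('a \<Rightarrow> 'b::real_inner) \<Rightarrow> ('b \<Rightarrow> ereal)
     \<Rightarrow> 'a \<Rightarrow> 'b \<Rightarrow> 'a \<Rightarrow> 'b \<Rightarrow> 'b \<Rightarrow> ereal" where
  "JJ f h K g xb wb x w y = Phi f h g x w + ereal (y \<bullet> (K x - w)) - Phi f h g xb wb"

text \<open>Step-size rule with conventions 1/0 = inf, 0/0 = inf (terms with zero
  denominator are ignored).\<close>
definition step_ratio :: "real \<Rightarrow> real \<Rightarrow> real \<Rightarrow> real" where
  "step_ratio a b dflt = (if b = 0 then dflt else a / b)"

definition pgrpda_tau ::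
  "real \<Rightarrow> real \<Rightarrow> real \<Rightarrow> ('a::real_normed_vector \<Rightarrow> 'b::real_normed_vector) \<Rightarrow> ('a \<Rightarrow> 'a)
     \<Rightarrow> real \<Rightarrow> 'a \<Rightarrow> 'a \<Rightarrow> real" where
  "pgrpda_tau \<beta> \<mu> \<mu>' K gradh tprev xn xp =
     min tprev
       (min (step_ratio (\<mu> * norm (xn - xp)) (sqrt \<beta> * norm (K xn - K xp)) tprev)
            (step_ratio (\<mu>' * norm (xn - xp)) (norm (gradh xn - gradh xp)) tprev))"

definition pgrpda ::
  "('a::euclidean_space \<Rightarrow> ereal) \<Rightarrow> ('a \<Rightarrow> 'a) \<Rightarrow> ('a \<Rightarrow> 'b::euclidean_space) \<Rightarrow> ('b \<Rightarrow> ereal)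
   \<Rightarrow> real \<Rightarrow> real \<Rightarrow> real \<Rightarrow> real \<Rightarrow> real
   \<Rightarrow> (nat \<Rightarrow> 'a) \<Rightarrow> (nat \<Rightarrow> 'a) \<Rightarrow> (nat \<Rightarrow> 'b) \<Rightarrow> (nat \<Rightarrow> 'b) \<Rightarrow> (nat \<Rightarrow> real) \<Rightarrow> (nat \<Rightarrow> real)
   \<Rightarrow> bool" where
  "pgrpda f gradh K g \<beta> \<psi> \<mu> \<mu>' \<tau>0 z x w y \<tau> \<sigma> \<longleftrightarrow>
     z 0 = x 0 \<and> \<tau> 0 = \<tau>0 \<and>
     (\<forall>n\<ge>1.
        z n = ((\<psi> - 1) / \<psi>) *\<^sub>R x (n - 1) + (1 / \<psi>) *\<^sub>R z (n - 1) \<and>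
        x n = prox (\<tau> (n - 1)) f
                (z n - \<tau> (n - 1) *\<^sub>R adjoint K (y (n - 1)) - \<tau> (n - 1) *\<^sub>R gradh (x (n - 1))) \<and>
        \<tau> n = pgrpda_tau \<beta> \<mu> \<mu>' K gradh (\<tau> (n - 1)) (x n) (x (n - 1)) \<and>
        \<sigma> n = \<beta> * \<tau> n \<and>
        w n = prox (1 / \<sigma> n) g ((1 / \<sigma> n) *\<^sub>R y (n - 1) + K (x n)) \<and>
        y n = y (n - 1) + \<sigma> n *\<^sub>R (K (x n) - w n))"

end

theory Submission
  imports Defs
begin

(* Test the prox optimality condition of x_{n+1} at xb and that of x_n at x_{n+1}, the subgradient
   inequality y_n in the subdifferential of g at w_n (a consequence of the dual update) at wb, and the
   gradient inequality of h at x_n; adding them bounds 2 tau_n J(x_n, w_n, y) by inner products.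
   Polarization and the identity for z_{n+2} as a convex combination of x_{n+1} and z_{n+1} turn these
   into the telescoping squared norms; the two cross terms are absorbed by Young's inequality thanks to
   the step-size rule. What remains needs (tau_n / tau_{n+1} mu)^2 <= psi tau_n / tau_{n-1} - 2 mu'.
   The step sizes are nonincreasing and bounded away from 0, so both ratios tend to 1, and the
   condition holds for all large n because mu^2 < psi - 2 mu'. *)

section \<open>Proximal maps of proper convex lower semicontinuous functions\<close>

lemma lsc_attains_min_on_compact:
  fixes f :: "'a::metric_space \<Rightarrow> ereal"
  assumes lsc: "lsc_fun f" and S: "compact S" "S \<noteq> {}"
  shows "\<exists>l\<in>S. \<forall>u\<in>S. f l \<le> f u"
proof -
  obtain a where a: "\<forall>n. a n \<in> f ` S" "a \<longlonglongrightarrow> Inf (f ` S)"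
    using Inf_as_limit[of "f ` S"] S(2) by blast
  then have "\<forall>n. \<exists>u. u \<in> S \<and> a n = f u" by blast
  then obtain v where v: "\<And>n. v n \<in> S" "\<And>n. a n = f (v n)" by metis
  obtain l r where lr: "l \<in> S" "strict_mono r" "(v \<circ> r) \<longlonglongrightarrow> l"
    using S(1) v(1) unfolding compact_eq_seq_compact_metric seq_compact_def by metis
  have "f l \<le> liminf (\<lambda>n. f ((v \<circ> r) n))"
    using lsc lr(3) unfolding lsc_fun_def by blast
  also have "\<dots> = Inf (f ` S)"
    using LIMSEQ_subseq_LIMSEQ[OF a(2) lr(2)] v(2) by (intro lim_imp_Liminf) (auto simp: o_def)
  finally have "f l \<le> Inf (f ` S)" .
  then have "f l \<le> f u" if "u \<in> S" for u using that by (meson INF_lower order_trans)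
  with lr(1) show ?thesis by blast
qed

lemma lsc_add_continuous:
  fixes f :: "'a::topological_space \<Rightarrow> ereal"
  assumes lsc: "lsc_fun f" and q: "continuous_on UNIV q"
  shows "lsc_fun (\<lambda>u. f u + ereal (q u))"
  unfolding lsc_fun_def
proof (intro allI impI)
  fix x :: 'a and X assume X: "X \<longlonglongrightarrow> x"
  have "liminf (\<lambda>n. ereal (q (X n))) = ereal (q x)"
    using continuous_on_tendsto_compose[OF q X] by (intro lim_imp_Liminf) auto
  moreover have "f x \<le> liminf (\<lambda>n. f (X n))" using lsc X unfolding lsc_fun_def by blast
  ultimately have "f x + ereal (q x) \<le> liminf (\<lambda>n. f (X n)) + liminf (\<lambda>n. ereal (q (X n)))"
    by (simp add: add_right_mono)
  also have "\<dots> \<le> liminf (\<lambda>n. f (X n) + ereal (q (X n)))"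
    by (rule ereal_liminf_add_mono) (simp add: \<open>liminf _ = ereal (q x)\<close>)
  finally show "f x + ereal (q x) \<le> liminf (\<lambda>n. f (X n) + ereal (q (X n)))" .
qed

lemma quadratic_eventually_exceeds:
  fixes a c M lam :: real
  assumes "lam > 0"
  shows "\<exists>R. \<forall>r>R. M < a - c * r + r\<^sup>2 / (2 * lam)"
proof (intro exI allI impI)
  fix r assume r: "r > max 1 (2 * lam * (\<bar>c\<bar> + \<bar>M - a\<bar>))"
  then have "r * (\<bar>c\<bar> + \<bar>M - a\<bar>) < r * (r / (2 * lam))"
    using assms by (intro mult_strict_left_mono) (auto simp: field_simps)
  moreover have "c * r + \<bar>M - a\<bar> \<le> r * (\<bar>c\<bar> + \<bar>M - a\<bar>)"
  proof -
    have "c * r \<le> r * \<bar>c\<bar>" using r by (simp add: mult.commute mult_left_mono)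
    moreover have "\<bar>M - a\<bar> \<le> r * \<bar>M - a\<bar>" using r by (simp add: mult_le_cancel_right1)
    ultimately show ?thesis by (simp add: distrib_left)
  qed
  ultimately show "M < a - c * r + r\<^sup>2 / (2 * lam)"
    by (simp add: power2_eq_square)
qed

lemma convex_efun_linear_growth:
  fixes f :: "'a::real_normed_vector \<Rightarrow> ereal"
  assumes cv: "convex_efun f" and ninf: "\<And>x. f x \<noteq> -\<infinity>" and f0: "f x0 = ereal f0"
    and B: "\<And>p. norm (p - x0) = 1 \<Longrightarrow> ereal B \<le> f p" and u: "norm (u - x0) > 1"
  shows "ereal (f0 - norm (u - x0) * (f0 - B)) \<le> f u"
proof (cases "f u")
  case (real fu)
  define d where "d = norm (u - x0)"
  define t where "t = 1 / d"
  have t: "0 < t" "t < 1" using u unfolding t_def d_def by (auto simp: divide_less_eq)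
  define p where "p = (1 - t) *\<^sub>R x0 + t *\<^sub>R u"
  have "p - x0 = t *\<^sub>R (u - x0)" unfolding p_def by (simp add: algebra_simps)
  moreover have "u \<noteq> x0" using u by auto
  ultimately have "norm (p - x0) = 1" unfolding t_def d_def by simp
  then have "ereal B \<le> f p" by (rule B)
  also have "f p \<le> ereal (1 - t) * f x0 + ereal t * f u"
    using cv t unfolding convex_efun_def p_def by blast
  finally have "B \<le> (1 - t) * f0 + t * fu" using f0 real by simp
  then have "d * B \<le> d * ((1 - t) * f0 + t * fu)" using u d_def by (simp add: mult_left_mono)
  also have "\<dots> = (d - 1) * f0 + fu" using u unfolding t_def d_def by (auto simp: field_simps)
  finally show ?thesis using real unfolding d_def by (simp add: algebra_simps)
qed (use ninf in auto)

lemma proper_convex_lsc_affine_minorant: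
  fixes f :: "'a::euclidean_space \<Rightarrow> ereal"
  assumes p: "proper_fun f" and cv: "convex_efun f" and lsc: "lsc_fun f"
  shows "\<exists>a c. \<forall>u. ereal (a - c * norm (u - v)) \<le> f u"
proof -
  have ninf: "\<And>x. f x \<noteq> -\<infinity>" using p unfolding proper_fun_def by blast
  obtain x0 where "f x0 \<noteq> \<infinity>" using p unfolding proper_fun_def by blast
  then obtain f0 where f0: "f x0 = ereal f0" using ninf by (cases "f x0") auto
  have "cball x0 1 \<noteq> {}" by simp
  then obtain l where l: "\<And>u. u \<in> cball x0 1 \<Longrightarrow> f l \<le> f u"
    using lsc_attains_min_on_compact[OF lsc compact_cball] by blast
  define B where "B = real_of_ereal (f l)"
  have B: "ereal B \<le> f u" if "norm (u - x0) \<le> 1" for u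
  proof -
    have "ereal B \<le> f l" unfolding B_def using ninf[of l] by (cases "f l") auto
    also have "f l \<le> f u" using l that by (simp add: dist_norm norm_minus_commute)
    finally show ?thesis .
  qed
  define c where "c = max 0 (f0 - B)"
  have c: "0 \<le> c" "f0 - B \<le> c" unfolding c_def by auto
  have centred: "ereal (f0 - c - c * norm (u - x0)) \<le> f u" for u
  proof (cases "norm (u - x0) \<le> 1")
    case True
    have "f0 - c - c * norm (u - x0) \<le> B"
      using c mult_nonneg_nonneg[OF c(1) norm_ge_zero[of "u - x0"]] by linarith
    then have "ereal (f0 - c - c * norm (u - x0)) \<le> ereal B" by simp
    then show ?thesis using B[OF True] by (rule order_trans)
  next
    case False
    have "norm (u - x0) * (f0 - B) \<le> norm (u - x0) * c" using c(2) by (simp add: mult_left_mono)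
    then have "ereal (f0 - c - c * norm (u - x0)) \<le> ereal (f0 - norm (u - x0) * (f0 - B))"
      using c(1) by (simp add: mult.commute)
    also have "\<dots> \<le> f u" using False by (intro convex_efun_linear_growth[OF cv ninf f0 B]) auto
    finally show ?thesis .
  qed
  show ?thesis
  proof (intro exI allI)
    fix u
    have "c * norm (u - x0) \<le> c * (norm (u - v) + norm (v - x0))"
      using c(1) norm_triangle_ineq[of "u - v" "v - x0"] by (simp add: mult_left_mono)
    then have "ereal (f0 - c - c * norm (v - x0) - c * norm (u - v)) \<le> ereal (f0 - c - c * norm (u - x0))"
      by (simp add: algebra_simps)
    then show "ereal (f0 - c - c * norm (v - x0) - c * norm (u - v)) \<le> f u"
      using centred[of u] by (rule order_trans)
  qed
qed

lemma prox_objective_has_minimizer: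
  fixes f :: "'a::euclidean_space \<Rightarrow> ereal"
  assumes p: "proper_fun f" and cv: "convex_efun f" and lsc: "lsc_fun f" and lam: "lam > 0"
  shows "\<exists>m. \<forall>u. f m + ereal ((norm (m - v))\<^sup>2 / (2 * lam)) \<le> f u + ereal ((norm (u - v))\<^sup>2 / (2 * lam))"
proof -
  define \<phi> where "\<phi> u = f u + ereal ((norm (u - v))\<^sup>2 / (2 * lam))" for u
  obtain a c where ac: "\<And>u. ereal (a - c * norm (u - v)) \<le> f u"
    using proper_convex_lsc_affine_minorant[OF p cv lsc] by blast
  have ninf: "\<And>x. f x \<noteq> -\<infinity>" using p unfolding proper_fun_def by blast
  obtain x0 where "f x0 \<noteq> \<infinity>" using p unfolding proper_fun_def by blast
  then obtain M where M: "\<phi> x0 = ereal M" using ninf unfolding \<phi>_def by (cases "f x0") auto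
  obtain R where R: "\<And>r. r > R \<Longrightarrow> M < a - c * r + r\<^sup>2 / (2 * lam)"
    using quadratic_eventually_exceeds[OF lam] by blast
  have far: "ereal M < \<phi> u" if "u \<notin> cball v R" for u
  proof -
    have "R < norm (u - v)" using that by (simp add: dist_norm norm_minus_commute)
    then have "ereal M < ereal (a - c * norm (u - v)) + ereal ((norm (u - v))\<^sup>2 / (2 * lam))"
      using R by simp
    also have "\<dots> \<le> \<phi> u" unfolding \<phi>_def using ac by (rule add_right_mono)
    finally show ?thesis .
  qed
  have "lsc_fun \<phi>"
    unfolding \<phi>_def using lam by (intro lsc_add_continuous lsc continuous_intros) auto
  moreover have x0: "x0 \<in> cball v R" using far[of x0] M by auto
  then have "cball v R \<noteq> {}" by blast
  ultimately obtain m where m: "\<And>u. u \<in> cball v R \<Longrightarrow> \<phi> m \<le> \<phi> u"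
    using lsc_attains_min_on_compact[OF _ compact_cball] by blast
  have "\<phi> m \<le> \<phi> u" for u
  proof (cases "u \<in> cball v R")
    case False
    then show ?thesis using m[OF x0] far[of u] M by simp
  qed (rule m)
  then show ?thesis unfolding \<phi>_def by blast
qed

lemma prox_minimizes:
  fixes f :: "'a::euclidean_space \<Rightarrow> ereal"
  assumes "proper_fun f" "convex_efun f" "lsc_fun f" "lam > 0"
  shows "f (prox lam f v) + ereal ((norm (prox lam f v - v))\<^sup>2 / (2 * lam))
           \<le> f u + ereal ((norm (u - v))\<^sup>2 / (2 * lam))"
proof -
  define \<phi> where "\<phi> u = f u + ereal ((norm (u - v))\<^sup>2 / (2 * lam))" for u
  have "\<exists>m. is_arg_min \<phi> (\<lambda>u. True) m"
    using prox_objective_has_minimizer[OF assms] unfolding is_arg_min_def \<phi>_def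
    by (auto simp: not_less)
  then have "is_arg_min \<phi> (\<lambda>u. True) (prox lam f v)"
    unfolding prox_def arg_min_def \<phi>_def[symmetric] by (rule someI_ex)
  then show ?thesis unfolding is_arg_min_def \<phi>_def by (auto simp: not_less)
qed

lemma norm_add_scaleR_sq:
  fixes a d :: "'a::real_inner"
  shows "(norm (a + t *\<^sub>R d))\<^sup>2 = (norm a)\<^sup>2 + 2 * t * (a \<bullet> d) + t\<^sup>2 * (norm d)\<^sup>2"
  by (simp only: power2_norm_eq_inner)
    (simp add: inner_add_left inner_add_right inner_commute algebra_simps power2_eq_square)

lemma prox_variational_inequality:
  fixes f :: "'a::euclidean_space \<Rightarrow> ereal"
  assumes f: "proper_fun f" "convex_efun f" "lsc_fun f" and lam: "lam > 0"
    and p: "p = prox lam f v"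
  shows "\<exists>fp. f p = ereal fp \<and> (\<forall>u. ereal (fp + (v - p) \<bullet> (u - p) / lam) \<le> f u)"
proof -
  define q where "q u = (norm (u - v))\<^sup>2 / (2 * lam)" for u
  have min: "f p + ereal (q p) \<le> f u + ereal (q u)" for u
    unfolding p q_def by (rule prox_minimizes[OF f lam])
  have ninf: "\<And>x. f x \<noteq> -\<infinity>" using f(1) unfolding proper_fun_def by blast
  obtain x0 where "f x0 \<noteq> \<infinity>" using f(1) unfolding proper_fun_def by blast
  then have "f p \<noteq> \<infinity>" using min[of x0] ninf[of x0] by auto
  then obtain fp where fp: "f p = ereal fp" using ninf[of p] by (cases "f p") auto
  have "ereal (fp + (v - p) \<bullet> (u - p) / lam) \<le> f u" for u
  proof (cases "f u")
    case (real fu)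
    define D where "D = fp - fu - (p - v) \<bullet> (u - p) / lam"
    define B where "B = (norm (u - p))\<^sup>2 / (2 * lam)"
    have "D \<le> t * B" if t: "0 < t" "t < 1" for t
    proof -
      define ut where "ut = (1 - t) *\<^sub>R p + t *\<^sub>R u"
      have "f ut \<le> ereal ((1 - t) * fp + t * fu)"
        using f(2) t fp real unfolding convex_efun_def ut_def by (metis times_ereal.simps(1) plus_ereal.simps(1))
      then have "ereal (fp + q p) \<le> ereal ((1 - t) * fp + t * fu) + ereal (q ut)"
        using min[of ut] fp by (metis add_right_mono order_trans plus_ereal.simps(1))
      moreover have utv: "ut - v = (p - v) + t *\<^sub>R (u - p)" unfolding ut_def by (simp add: algebra_simps)
      have "q ut = q p + t * ((p - v) \<bullet> (u - p) / lam) + t * (t * B)"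
        unfolding q_def B_def utv norm_add_scaleR_sq using lam by (simp add: field_simps power2_eq_square)
      ultimately have "t * D \<le> t * (t * B)" unfolding D_def by (simp add: algebra_simps)
      then show ?thesis using t by simp
    qed
    then have "eventually (\<lambda>t. D \<le> t * B) (at_right 0)"
      unfolding eventually_at_right_field by (intro exI[of _ 1]) auto
    moreover have "((\<lambda>t. t * B) \<longlongrightarrow> 0 * B) (at_right 0)" by (intro tendsto_intros)
    ultimately have "D \<le> 0" by (simp add: tendsto_lowerbound)
    moreover have "(v - p) \<bullet> (u - p) = - ((p - v) \<bullet> (u - p))" by (simp add: inner_diff_left)
    ultimately show ?thesis using real unfolding D_def by simp
  qed (use ninf in auto)
  with fp show ?thesis by blast
qed

lemma prox_dual_update_subgradient:
  fixes g :: "'b::euclidean_space \<Rightarrow> ereal"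
  assumes g: "proper_fun g" "convex_efun g" "lsc_fun g" and \<sigma>: "\<sigma> > 0"
    and w: "w = prox (1 / \<sigma>) g ((1 / \<sigma>) *\<^sub>R y + v)" and y': "y' = y + \<sigma> *\<^sub>R (v - w)"
  shows "\<exists>gw. g w = ereal gw \<and> (\<forall>u. ereal (gw + y' \<bullet> (u - w)) \<le> g u)"
proof -
  have "(((1 / \<sigma>) *\<^sub>R y + v) - w) \<bullet> d / (1 / \<sigma>) = y' \<bullet> d" for d
  proof -
    have "\<sigma> *\<^sub>R (((1 / \<sigma>) *\<^sub>R y + v) - w) = y'" unfolding y' using \<sigma> by (simp add: algebra_simps)
    then show ?thesis by (metis divide_divide_eq_right div_by_1 inner_scaleR_left mult.commute times_divide_eq_left)
  qed
  then show ?thesis using prox_variational_inequality[OF g _ w] \<sigma> by simp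
qed

section \<open>The one-step estimate\<close>

lemma norm_sq_convex_combination:
  fixes a b c :: "'a::real_inner"
  shows "(norm (c - ((1 - t) *\<^sub>R a + t *\<^sub>R b)))\<^sup>2
           = (1 - t) * (norm (c - a))\<^sup>2 + t * (norm (c - b))\<^sup>2 - t * (1 - t) * (norm (a - b))\<^sup>2"
proof -
  have "c - ((1 - t) *\<^sub>R a + t *\<^sub>R b) = (1 - t) *\<^sub>R (c - a) + t *\<^sub>R (c - b)"
    by (simp add: algebra_simps)
  moreover have "a - b = (c - b) - (c - a)" by simp
  ultimately show ?thesis
    unfolding power2_norm_eq_inner
    by (simp add: inner_add_left inner_add_right inner_diff_left inner_diff_right inner_commute
        algebra_simps power2_eq_square)
qed

lemma golden_step_norm_identity:
  fixes xb x z z' :: "'a::real_inner"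
  assumes \<psi>: "\<psi> > 1" and z': "z' = ((\<psi> - 1) / \<psi>) *\<^sub>R x + (1 / \<psi>) *\<^sub>R z"
  shows "\<psi> / (\<psi> - 1) * (norm (xb - z'))\<^sup>2
           = (norm (xb - x))\<^sup>2 + (norm (xb - z))\<^sup>2 / (\<psi> - 1) - (norm (x - z))\<^sup>2 / \<psi>"
proof -
  define t where "t = 1 / \<psi>"
  define k where "k = \<psi> / (\<psi> - 1)"
  have "z' = (1 - t) *\<^sub>R x + t *\<^sub>R z" using \<psi> unfolding z' t_def by (simp add: diff_divide_distrib)
  then have E: "k * (norm (xb - z'))\<^sup>2
      = (k * (1 - t)) * (norm (xb - x))\<^sup>2 + (k * t) * (norm (xb - z))\<^sup>2 - (k * (t * (1 - t))) * (norm (x - z))\<^sup>2"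
    by (simp only: norm_sq_convex_combination) (simp add: algebra_simps)
  moreover have "k * (1 - t) = 1" "k * t = 1 / (\<psi> - 1)" "k * (t * (1 - t)) = 1 / \<psi>"
    using \<psi> unfolding k_def t_def by (simp_all add: field_simps)
  ultimately have "k * (norm (xb - z'))\<^sup>2
      = 1 * (norm (xb - x))\<^sup>2 + 1 / (\<psi> - 1) * (norm (xb - z))\<^sup>2 - 1 / \<psi> * (norm (x - z))\<^sup>2"
    by (simp only:)
  then show ?thesis unfolding k_def by simp
qed

lemma inner_le_young:
  fixes u v :: "'a::real_inner"
  assumes t: "t \<ge> 0" and s: "s > 0" and r: "t * norm u \<le> r"
  shows "2 * t * (v \<bullet> u) \<le> (norm v)\<^sup>2 / s + s * r\<^sup>2"
proof -
  have "2 * t * (v \<bullet> u) \<le> 2 * norm v * (t * norm u)"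
    using mult_left_mono[OF norm_cauchy_schwarz[of v u] t] by (simp add: algebra_simps)
  also have "\<dots> \<le> 2 * norm v * r" using r by (simp add: mult_left_mono)
  also have "\<dots> \<le> (norm v)\<^sup>2 / s + s * r\<^sup>2"
  proof -
    have "0 \<le> (norm v / sqrt s - sqrt s * r)\<^sup>2" by simp
    then show ?thesis using s by (simp add: power2_eq_square field_simps)
  qed
  finally show ?thesis .
qed

lemma convex_on_above_tangent:
  fixes h :: "'a::real_normed_vector \<Rightarrow> real"
  assumes cv: "convex_on UNIV h" and d: "(h has_derivative G) (at x)"
  shows "h x + G (y - x) \<le> h y"
proof -
  define \<phi> where "\<phi> t = h (x + t *\<^sub>R (y - x))" for t :: real
  have "convex_on UNIV \<phi>"
  proof (rule convex_onI)
    fix t a b :: real assume t: "t > 0" "t < 1"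
    have "x + ((1 - t) *\<^sub>R a + t *\<^sub>R b) *\<^sub>R (y - x)
        = (1 - t) *\<^sub>R (x + a *\<^sub>R (y - x)) + t *\<^sub>R (x + b *\<^sub>R (y - x))"
      by (simp add: algebra_simps)
    then show "\<phi> ((1 - t) *\<^sub>R a + t *\<^sub>R b) \<le> (1 - t) * \<phi> a + t * \<phi> b"
      unfolding \<phi>_def using convex_onD[OF cv, of t] t by simp
  qed simp
  moreover have "(\<phi> has_field_derivative G (y - x)) (at 0)"
  proof -
    have "((\<lambda>t. x + t *\<^sub>R (y - x)) has_derivative (\<lambda>t. t *\<^sub>R (y - x))) (at 0)"
      by (auto intro!: derivative_eq_intros)
    moreover have "(h has_derivative G) (at (x + 0 *\<^sub>R (y - x)))" using d by simp
    ultimately have "(\<phi> has_derivative (\<lambda>t. G (t *\<^sub>R (y - x)))) (at 0)"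
      unfolding \<phi>_def by (rule has_derivative_compose[unfolded o_def])
    moreover have "(\<lambda>t. G (t *\<^sub>R (y - x))) = (*) (G (y - x))"
      using linear_scale[OF has_derivative_linear[OF d]] by (auto simp: mult.commute)
    ultimately show ?thesis unfolding has_field_derivative_def by simp
  qed
  ultimately have "G (y - x) * (1 - 0) \<le> \<phi> 1 - \<phi> 0"
    by (intro convex_on_imp_above_tangent) auto
  then show ?thesis unfolding \<phi>_def by simp
qed

lemma prox_optimality_scaled:
  fixes K :: "'a::euclidean_space \<Rightarrow> 'b::euclidean_space" and a b v G :: 'a and y :: 'b
  assumes K: "linear K" and F: "Fa \<ge> Fb + (v - t *\<^sub>R adjoint K y - t *\<^sub>R G - b) \<bullet> (a - b) / t"
    and t: "t > 0"
  shows "t * Fa \<ge> t * Fb + (v - b) \<bullet> (a - b) - t * (y \<bullet> (K a - K b)) - t * (G \<bullet> (a - b))"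
proof -
  have "(v - t *\<^sub>R adjoint K y - t *\<^sub>R G - b) \<bullet> (a - b)
      = (v - b) \<bullet> (a - b) - t * (y \<bullet> (K a - K b)) - t * (G \<bullet> (a - b))"
    by (simp add: inner_diff_left adjoint_works[OF K] inner_commute linear_diff[OF K] algebra_simps)
  then have "t * Fa \<ge> t * (Fb + ((v - b) \<bullet> (a - b) - t * (y \<bullet> (K a - K b)) - t * (G \<bullet> (a - b))) / t)"
    using F t by (simp add: mult_left_mono)
  then show ?thesis using t by (simp add: distrib_left)
qed

(* Naming: xp, xn, xn1 stand for x_{n-1}, x_n, x_{n+1} (likewise for z, y, w and the step sizes tp, tn),
   Gp and Gn for the gradients of h at x_{n-1} and x_n, and Fxn, Hxn, Gwn, ... for values of f, h, g.
   F1 and F2 are the prox optimality conditions of x_{n+1} tested at xb and of x_n tested at x_{n+1}. *)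
lemma primal_dual_step_descent:
  fixes K :: "'a::euclidean_space \<Rightarrow> 'b::euclidean_space"
    and xb xn xn1 zn zn1 Gn Gp :: 'a and wb wn yp yn yy :: 'b
  assumes K: "linear K"
    and F1: "Fxb \<ge> Fxn1 + (zn1 - tn *\<^sub>R adjoint K yn - tn *\<^sub>R Gn - xn1) \<bullet> (xb - xn1) / tn"
    and F2: "Fxn1 \<ge> Fxn + (zn - tp *\<^sub>R adjoint K yp - tp *\<^sub>R Gp - xn) \<bullet> (xn1 - xn) / tp"
    and Gw: "Gwb \<ge> Gwn + yn \<bullet> (wb - wn)"
    and H: "Hxb \<ge> Hxn + Gn \<bullet> (xb - xn)"
    and z: "zn - xn = \<psi> *\<^sub>R (zn1 - xn)"
    and y: "yn = yp + (\<beta> * tn) *\<^sub>R (K xn - wn)"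
    and Kxb: "K xb = wb"
    and tn: "tn > 0" and tp: "tp > 0" and \<beta>: "\<beta> > 0"
  shows "2 * tn * (Fxn + Hxn + Gwn + yy \<bullet> (K xn - wn) - Fxb - Hxb - Gwb)
           \<le> - 2 * ((zn1 - xn1) \<bullet> (xb - xn1)) - 2 * (\<psi> * (tn / tp)) * ((zn1 - xn) \<bullet> (xn1 - xn))
             + 2 * tn * ((yn - yp) \<bullet> (K xn - K xn1)) + 2 * ((yy - yn) \<bullet> (yn - yp)) / \<beta>
             - 2 * tn * ((Gn - Gp) \<bullet> (xn1 - xn))"
proof -
  note F1' = prox_optimality_scaled[OF K F1 tn]
  have "tp * Fxn1 \<ge> tp * Fxn + \<psi> * ((zn1 - xn) \<bullet> (xn1 - xn))
                     - tp * (yp \<bullet> (K xn1 - K xn)) - tp * (Gp \<bullet> (xn1 - xn))"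
    using prox_optimality_scaled[OF K F2 tp] unfolding z by simp
  from mult_left_mono[OF this, of "tn / tp"]
  have F2': "tn * Fxn1 \<ge> tn * Fxn + \<psi> * (tn / tp) * ((zn1 - xn) \<bullet> (xn1 - xn))
                          - tn * (yp \<bullet> (K xn1 - K xn)) - tn * (Gp \<bullet> (xn1 - xn))"
    using tn tp by (simp add: field_simps)
  have "K xn - wn = (1 / (\<beta> * tn)) *\<^sub>R (yn - yp)" using y tn \<beta> by simp
  then have "(yy - yn) \<bullet> (K xn - wn) = ((yy - yn) \<bullet> (yn - yp)) / (\<beta> * tn)" by simp
  moreover have "yn \<bullet> (K xb - K xn1) + yp \<bullet> (K xn1 - K xn) - yn \<bullet> (wb - wn) + yy \<bullet> (K xn - wn)
      = (yn - yp) \<bullet> (K xn - K xn1) + (yy - yn) \<bullet> (K xn - wn)"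
    unfolding Kxb by (simp add: inner_diff_left inner_diff_right)
  ultimately have coupling: "tn * (yn \<bullet> (K xb - K xn1)) + tn * (yp \<bullet> (K xn1 - K xn))
      - tn * (yn \<bullet> (wb - wn)) + tn * (yy \<bullet> (K xn - wn))
      = tn * ((yn - yp) \<bullet> (K xn - K xn1)) + ((yy - yn) \<bullet> (yn - yp)) / \<beta>"
    using tn \<beta> by (simp add: distrib_left[symmetric] right_diff_distrib[symmetric]) (simp add: field_simps)
  have gradients: "tn * (Gn \<bullet> (xb - xn1)) + tn * (Gp \<bullet> (xn1 - xn)) - tn * (Gn \<bullet> (xb - xn))
      = - (tn * ((Gn - Gp) \<bullet> (xn1 - xn)))"
    by (simp add: inner_diff_left inner_diff_right algebra_simps)
  have "tn * Hxb \<ge> tn * Hxn + tn * (Gn \<bullet> (xb - xn))" "tn * Gwb \<ge> tn * Gwn + tn * (yn \<bullet> (wb - wn))"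
    using H Gw tn by (simp_all add: distrib_left[symmetric])
  then have "tn * (Fxn + Hxn + Gwn + yy \<bullet> (K xn - wn) - Fxb - Hxb - Gwb)
      \<le> - ((zn1 - xn1) \<bullet> (xb - xn1)) - \<psi> * (tn / tp) * ((zn1 - xn) \<bullet> (xn1 - xn))
        + tn * ((yn - yp) \<bullet> (K xn - K xn1)) + ((yy - yn) \<bullet> (yn - yp)) / \<beta>
        - tn * ((Gn - Gp) \<bullet> (xn1 - xn))"
    using F1' F2' coupling gradients by (simp add: algebra_simps)
  then show ?thesis by simp
qed

lemma one_step_energy_estimate:
  fixes K :: "'a::euclidean_space \<Rightarrow> 'b::euclidean_space"
    and xb xp xn xn1 zn zn1 zn2 Gn Gp :: 'a and wb wn yp yn yy :: 'b
  assumes K: "linear K"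
    and F1: "Fxb \<ge> Fxn1 + (zn1 - tn *\<^sub>R adjoint K yn - tn *\<^sub>R Gn - xn1) \<bullet> (xb - xn1) / tn"
    and F2: "Fxn1 \<ge> Fxn + (zn - tp *\<^sub>R adjoint K yp - tp *\<^sub>R Gp - xn) \<bullet> (xn1 - xn) / tp"
    and Gw: "Gwb \<ge> Gwn + yn \<bullet> (wb - wn)"
    and H: "Hxb \<ge> Hxn + Gn \<bullet> (xb - xn)"
    and z1: "zn1 = ((\<psi> - 1) / \<psi>) *\<^sub>R xn + (1 / \<psi>) *\<^sub>R zn"
    and z2: "zn2 = ((\<psi> - 1) / \<psi>) *\<^sub>R xn1 + (1 / \<psi>) *\<^sub>R zn1"
    and y: "yn = yp + (\<beta> * tn) *\<^sub>R (K xn - wn)"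
    and Kxb: "K xb = wb"
    and tn: "tn > 0" and tp: "tp > 0" "tn \<le> tp" and \<beta>: "\<beta> > 0"
    and \<psi>: "\<psi> > 1" "\<psi>\<^sup>2 \<le> \<psi> + 1" and \<mu>': "\<mu>' > 0"
    and grad_step: "tn * norm (Gn - Gp) \<le> \<mu>' * norm (xn - xp)"
    and K_step: "tn * sqrt \<beta> * norm (K xn1 - K xn) \<le> \<kappa> * norm (xn1 - xn)"
    and \<kappa>: "\<kappa>\<^sup>2 \<le> \<psi> * (tn / tp) - 2 * \<mu>'"
  shows "2 * tn * (Fxn + Hxn + Gwn + yy \<bullet> (K xn - wn) - Fxb - Hxb - Gwb)
      + (\<psi> / (\<psi> - 1) * (norm (xb - zn2))\<^sup>2 + 1 / \<beta> * (norm (yy - yn))\<^sup>2 + \<mu>' * (norm (xn - xn1))\<^sup>2)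
    \<le> \<psi> / (\<psi> - 1) * (norm (xb - zn1))\<^sup>2 + 1 / \<beta> * (norm (yy - yp))\<^sup>2 + \<mu>' * (norm (xn - xp))\<^sup>2
      - \<psi> * (tn / tp) * (norm (xn - zn1))\<^sup>2"
proof -
  define P where "P = \<psi> * (tn / tp)"
  have "\<psi> *\<^sub>R zn1 = (\<psi> - 1) *\<^sub>R xn + zn" using \<psi>(1) unfolding z1 by (simp add: scaleR_add_right)
  then have "zn - xn = \<psi> *\<^sub>R (zn1 - xn)" by (simp add: algebra_simps)
  note descent = primal_dual_step_descent[OF K F1 F2 Gw H this y Kxb tn tp(1) \<beta>, of yy, folded P_def]
  have polar_x: "2 * ((zn1 - xn1) \<bullet> (xb - xn1)) = (norm (xn1 - zn1))\<^sup>2 + (norm (xb - xn1))\<^sup>2 - (norm (xb - zn1))\<^sup>2"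
    "2 * ((zn1 - xn) \<bullet> (xn1 - xn)) = (norm (xn - zn1))\<^sup>2 + (norm (xn1 - xn))\<^sup>2 - (norm (xn1 - zn1))\<^sup>2"
    by (simp_all add: dot_norm_neg norm_minus_commute)
  have polar_y: "2 * ((yy - yn) \<bullet> (yn - yp)) = (norm (yy - yp))\<^sup>2 - (norm (yy - yn))\<^sup>2 - (norm (yn - yp))\<^sup>2"
    using dot_norm_neg[of "yy - yn" "yp - yn"] by (simp add: inner_diff_right norm_minus_commute)
  have golden: "\<psi> / (\<psi> - 1) * (norm (xb - zn2))\<^sup>2
      = (norm (xb - xn1))\<^sup>2 + (norm (xb - zn1))\<^sup>2 / (\<psi> - 1) - (norm (xn1 - zn1))\<^sup>2 / \<psi>"
    by (rule golden_step_norm_identity[OF \<psi>(1) z2])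
  have golden': "\<psi> / (\<psi> - 1) * (norm (xb - zn1))\<^sup>2 = (norm (xb - zn1))\<^sup>2 + (norm (xb - zn1))\<^sup>2 / (\<psi> - 1)"
    using \<psi>(1) by (simp add: field_simps)
  have grad: "- (2 * tn * ((Gn - Gp) \<bullet> (xn1 - xn))) \<le> \<mu>' * (norm (xn - xn1))\<^sup>2 + \<mu>' * (norm (xn - xp))\<^sup>2"
    using inner_le_young[of tn "1 / \<mu>'" "Gn - Gp" "\<mu>' * norm (xn - xp)" "xn - xn1"] tn \<mu>' grad_step
    by (simp add: inner_diff_left inner_diff_right inner_commute power_mult_distrib power2_eq_square
        algebra_simps)
  have K_bound: "tn * norm (K xn - K xn1) \<le> \<kappa> * norm (xn1 - xn) / sqrt \<beta>"
    using K_step \<beta> by (simp add: le_divide_eq norm_minus_commute mult_ac)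
  have coupling: "2 * tn * ((yn - yp) \<bullet> (K xn - K xn1)) \<le> (norm (yn - yp))\<^sup>2 / \<beta> + \<kappa>\<^sup>2 * (norm (xn1 - xn))\<^sup>2"
    using inner_le_young[OF less_imp_le[OF tn] \<beta> K_bound, of "yn - yp"] \<beta>
    by (simp add: power_divide power_mult_distrib)
  have "\<kappa>\<^sup>2 * (norm (xn1 - xn))\<^sup>2 \<le> (P - 2 * \<mu>') * (norm (xn1 - xn))\<^sup>2"
    using \<kappa> unfolding P_def by (simp add: mult_right_mono)
  then have \<kappa>': "\<kappa>\<^sup>2 * (norm (xn1 - xn))\<^sup>2 \<le> P * (norm (xn1 - xn))\<^sup>2 - 2 * (\<mu>' * (norm (xn - xn1))\<^sup>2)"
    by (simp add: algebra_simps norm_minus_commute)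
  have "P \<le> 1 + 1 / \<psi>"
  proof -
    have "tn / tp \<le> 1" using tn tp by simp
    then have "P \<le> \<psi>" unfolding P_def using \<psi>(1) mult_left_mono[of "tn / tp" 1 \<psi>] by simp
    also have "\<psi> \<le> 1 + 1 / \<psi>" using \<psi> by (simp add: field_simps power2_eq_square)
    finally show ?thesis .
  qed
  then have "P * (norm (xn1 - zn1))\<^sup>2 \<le> (1 + 1 / \<psi>) * (norm (xn1 - zn1))\<^sup>2" by (simp add: mult_right_mono)
  then have P_bound: "P * (norm (xn1 - zn1))\<^sup>2 \<le> (norm (xn1 - zn1))\<^sup>2 + (norm (xn1 - zn1))\<^sup>2 / \<psi>"
    by (simp add: algebra_simps)
  have polar_P: "2 * P * ((zn1 - xn) \<bullet> (xn1 - xn))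
      = P * (norm (xn - zn1))\<^sup>2 + P * (norm (xn1 - xn))\<^sup>2 - P * (norm (xn1 - zn1))\<^sup>2"
    using arg_cong[OF polar_x(2), of "(*) P"] by (simp add: algebra_simps)
  have polar_y': "2 * ((yy - yn) \<bullet> (yn - yp)) / \<beta>
      = 1 / \<beta> * (norm (yy - yp))\<^sup>2 - 1 / \<beta> * (norm (yy - yn))\<^sup>2 - (norm (yn - yp))\<^sup>2 / \<beta>"
    unfolding polar_y by (simp add: diff_divide_distrib)
  show ?thesis unfolding P_def[symmetric]
    using descent polar_x(1) polar_P polar_y' golden golden' grad coupling \<kappa>' P_bound by linarith
qed

section \<open>Step sizes and iterates of P-GRPDA\<close>

lemma step_ratio_mult_le:
  assumes "0 \<le> a" "0 \<le> b" "t \<le> step_ratio a b d"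
  shows "t * b \<le> a"
  using assms by (cases "b = 0") (auto simp: step_ratio_def le_divide_eq)

lemma min_le_step_ratio:
  assumes "0 \<le> b" "r * b \<le> a"
  shows "min d r \<le> step_ratio a b d"
proof (cases "b = 0")
  case False
  have "min d r * b \<le> r * b" using assms(1) by (intro mult_right_mono) auto
  then have "min d r * b \<le> a" using assms(2) by linarith
  then show ?thesis using False assms(1) by (simp add: step_ratio_def le_divide_eq)
qed (simp add: step_ratio_def)

lemma pgrpda_tau_bounds:
  fixes K :: "'a::real_normed_vector \<Rightarrow> 'b::real_normed_vector" and gradh :: "'a \<Rightarrow> 'a"
  assumes t': "t' = pgrpda_tau \<beta> \<mu> \<mu>' K gradh t xn xp"
    and \<beta>: "\<beta> > 0" and \<mu>: "\<mu> \<ge> 0" "\<mu>' \<ge> 0"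
    and C: "C > 0" "norm (K xn - K xp) \<le> C * norm (xn - xp)"
    and L: "L > 0" "norm (gradh xn - gradh xp) \<le> L * norm (xn - xp)"
  shows "t' \<le> t" "min t (min (\<mu> / (sqrt \<beta> * C)) (\<mu>' / L)) \<le> t'"
    "t' * sqrt \<beta> * norm (K xn - K xp) \<le> \<mu> * norm (xn - xp)"
    "t' * norm (gradh xn - gradh xp) \<le> \<mu>' * norm (xn - xp)"
proof -
  let ?rK = "step_ratio (\<mu> * norm (xn - xp)) (sqrt \<beta> * norm (K xn - K xp)) t"
  let ?rG = "step_ratio (\<mu>' * norm (xn - xp)) (norm (gradh xn - gradh xp)) t"
  have t'_eq: "t' = min t (min ?rK ?rG)" unfolding t' pgrpda_tau_def ..
  then show "t' \<le> t" by simp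
  have "\<mu> / (sqrt \<beta> * C) * (sqrt \<beta> * norm (K xn - K xp)) = \<mu> * norm (K xn - K xp) / C"
    using \<beta> by simp
  also have "\<dots> \<le> \<mu> * norm (xn - xp)"
    using C mult_left_mono[OF C(2) \<mu>(1)] by (simp add: divide_le_eq mult_ac)
  finally have "min t (\<mu> / (sqrt \<beta> * C)) \<le> ?rK" using \<beta> by (intro min_le_step_ratio) auto
  moreover have "\<mu>' / L * norm (gradh xn - gradh xp) \<le> \<mu>' * norm (xn - xp)"
    using L mult_left_mono[OF L(2) \<mu>(2)] by (simp add: divide_le_eq mult_ac)
  then have "min t (\<mu>' / L) \<le> ?rG" by (intro min_le_step_ratio) auto
  ultimately show "min t (min (\<mu> / (sqrt \<beta> * C)) (\<mu>' / L)) \<le> t'" unfolding t'_eq by linarith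
  show "t' * sqrt \<beta> * norm (K xn - K xp) \<le> \<mu> * norm (xn - xp)"
    using step_ratio_mult_le[of "\<mu> * norm (xn - xp)" "sqrt \<beta> * norm (K xn - K xp)" t' t] t'_eq \<mu> \<beta>
    by (simp add: mult.assoc)
  show "t' * norm (gradh xn - gradh xp) \<le> \<mu>' * norm (xn - xp)"
    using step_ratio_mult_le[of "\<mu>' * norm (xn - xp)" "norm (gradh xn - gradh xp)" t' t] t'_eq \<mu>
    by simp
qed

lemma pgrpda_SucD:
  assumes "pgrpda f gradh K g \<beta> \<psi> \<mu> \<mu>' \<tau>0 z x w y \<tau> \<sigma>"
  shows "z (Suc k) = ((\<psi> - 1) / \<psi>) *\<^sub>R x k + (1 / \<psi>) *\<^sub>R z k"
    "x (Suc k) = prox (\<tau> k) f (z (Suc k) - \<tau> k *\<^sub>R adjoint K (y k) - \<tau> k *\<^sub>R gradh (x k))"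
    "\<tau> (Suc k) = pgrpda_tau \<beta> \<mu> \<mu>' K gradh (\<tau> k) (x (Suc k)) (x k)"
    "\<sigma> (Suc k) = \<beta> * \<tau> (Suc k)"
    "w (Suc k) = prox (1 / \<sigma> (Suc k)) g ((1 / \<sigma> (Suc k)) *\<^sub>R y k + K (x (Suc k)))"
    "y (Suc k) = y k + \<sigma> (Suc k) *\<^sub>R (K (x (Suc k)) - w (Suc k))"
  using assms unfolding pgrpda_def by (metis diff_Suc_1 le_add1 plus_1_eq_Suc)+

lemma pgrpda_step_sizes:
  fixes K :: "'a::euclidean_space \<Rightarrow> 'b::euclidean_space"
  assumes K: "linear K" and Lip: "\<And>u v. norm (gradh u - gradh v) \<le> L * norm (u - v)"
    and par: "\<beta> > 0" "\<mu> > 0" "\<mu>' > 0" "\<tau>0 > 0"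
    and alg: "pgrpda f gradh K g \<beta> \<psi> \<mu> \<mu>' \<tau>0 z x w y \<tau> \<sigma>"
  shows "\<exists>m>0. \<forall>k. m \<le> \<tau> k"
    and "\<tau> (Suc k) \<le> \<tau> k"
    and "\<tau> (Suc k) * sqrt \<beta> * norm (K (x (Suc k)) - K (x k)) \<le> \<mu> * norm (x (Suc k) - x k)"
    and "\<tau> (Suc k) * norm (gradh (x (Suc k)) - gradh (x k)) \<le> \<mu>' * norm (x (Suc k) - x k)"
proof -
  obtain C where C: "C > 0" "\<And>u. norm (K u) \<le> norm u * C"
    using linear_conv_bounded_linear K bounded_linear.pos_bounded by blast
  have KC: "norm (K u - K v) \<le> C * norm (u - v)" for u v
    using C(2)[of "u - v"] by (simp add: linear_diff[OF K] mult.commute)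
  define L' where "L' = max L 1"
  have L': "L' > 0" "norm (gradh u - gradh v) \<le> L' * norm (u - v)" for u v
    using Lip[of u v] mult_right_mono[of L L' "norm (u - v)"] unfolding L'_def by auto
  note bounds = pgrpda_tau_bounds[OF pgrpda_SucD(3)[OF alg] par(1) less_imp_le[OF par(2)]
      less_imp_le[OF par(3)] C(1) KC L'(1) L'(2)]
  show "\<tau> (Suc k) \<le> \<tau> k" by (rule bounds(1))
  show "\<tau> (Suc k) * sqrt \<beta> * norm (K (x (Suc k)) - K (x k)) \<le> \<mu> * norm (x (Suc k) - x k)"
    by (rule bounds(3))
  show "\<tau> (Suc k) * norm (gradh (x (Suc k)) - gradh (x k)) \<le> \<mu>' * norm (x (Suc k) - x k)"
    by (rule bounds(4))
  define m where "m = min \<tau>0 (min (\<mu> / (sqrt \<beta> * C)) (\<mu>' / L'))"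
  have "m \<le> \<tau> k" for k
  proof (induction k)
    case 0
    then show ?case using alg unfolding m_def pgrpda_def by simp
  next
    case (Suc k)
    then show ?case using bounds(2)[of k] unfolding m_def by linarith
  qed
  moreover have "m > 0" unfolding m_def using par C(1) L'(1) by simp
  ultimately show "\<exists>m>0. \<forall>k. m \<le> \<tau> k" by blast
qed

lemma eventually_step_size_ratio_condition:
  fixes \<tau> :: "nat \<Rightarrow> real"
  assumes dec: "decseq \<tau>" and m: "m > 0" "\<And>k. m \<le> \<tau> k" and gap: "\<mu>\<^sup>2 < \<psi> - 2 * \<mu>'"
  shows "eventually (\<lambda>n. (\<tau> n / \<tau> (n + 1) * \<mu>)\<^sup>2 \<le> \<psi> * (\<tau> n / \<tau> (n - 1)) - 2 * \<mu>') sequentially"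
proof -
  obtain l where l: "\<tau> \<longlonglongrightarrow> l" using decseq_convergent[OF dec, of m] m(2) by blast
  have "m \<le> l" using m(2) by (intro LIMSEQ_le_const[OF l]) blast
  then have "l \<noteq> 0" using m(1) by simp
  define E where "E n = \<psi> * (\<tau> n / \<tau> (n - 1)) - 2 * \<mu>' - (\<tau> n / \<tau> (n + 1) * \<mu>)\<^sup>2" for n
  have "(\<lambda>n. \<psi> * (\<tau> (Suc n) / \<tau> n) - 2 * \<mu>' - (\<tau> (Suc n) / \<tau> (Suc (Suc n)) * \<mu>)\<^sup>2)
      \<longlonglongrightarrow> \<psi> * (l / l) - 2 * \<mu>' - (l / l * \<mu>)\<^sup>2"
    using LIMSEQ_Suc[OF l] LIMSEQ_Suc[OF LIMSEQ_Suc[OF l]] \<open>l \<noteq> 0\<close> by (intro tendsto_intros l)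
  then have "(\<lambda>n. E (Suc n)) \<longlonglongrightarrow> \<psi> * (l / l) - 2 * \<mu>' - (l / l * \<mu>)\<^sup>2"
    unfolding E_def by simp
  then have "(\<lambda>n. E (Suc n)) \<longlonglongrightarrow> \<psi> - 2 * \<mu>' - \<mu>\<^sup>2" using \<open>l \<noteq> 0\<close> by simp
  then have "E \<longlonglongrightarrow> \<psi> - 2 * \<mu>' - \<mu>\<^sup>2" by (rule LIMSEQ_imp_Suc)
  then have "eventually (\<lambda>n. E n > 0) sequentially" using gap by (intro order_tendstoD(1)) auto
  then show ?thesis unfolding E_def by (rule eventually_mono) simp
qed

lemma sq_le_succ_if_le_golden_ratio:
  fixes \<psi> :: real
  assumes "1 / 2 \<le> \<psi>" "\<psi> \<le> (1 + sqrt 5) / 2"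
  shows "\<psi>\<^sup>2 \<le> \<psi> + 1"
proof -
  have "(\<psi> - 1 / 2)\<^sup>2 \<le> (sqrt 5 / 2)\<^sup>2" using assms by (intro power_mono) auto
  then show ?thesis by (simp add: power2_eq_square power_divide algebra_simps)
qed

lemma pgrpda_parameter_gap:
  fixes \<psi> \<mu> \<mu>' :: real
  assumes "\<psi> \<le> (1 + sqrt 5) / 2" "0 < 2 * \<mu>'" "2 * \<mu>' < \<mu>" "\<mu> < \<psi> / 2"
  shows "\<mu>\<^sup>2 < \<psi> - 2 * \<mu>'"
proof -
  have "sqrt 5 < 3" by (simp add: real_sqrt_less_iff[of 5 9, simplified])
  then have "\<mu> < 1" using assms by simp
  then have "\<mu>\<^sup>2 < \<mu>" using assms by (simp add: power2_eq_square)
  then show ?thesis using assms by linarith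
qed

lemma Omega_finite_values:
  assumes "(xb, wb, yb) \<in> Omega f gradh K g"
  shows "\<exists>Fxb Gwb. f xb = ereal Fxb \<and> g wb = ereal Gwb \<and> K xb = wb"
proof -
  obtain s where "s \<in> subdiff f xb" "yb \<in> subdiff g wb" "K xb = wb"
    using assms unfolding Omega_def by blast
  then show ?thesis unfolding subdiff_def by (cases "f xb"; cases "g wb") auto
qed

lemma pgrpda_energy_inequality:
  fixes f :: "'a::euclidean_space \<Rightarrow> ereal" and g :: "'b::euclidean_space \<Rightarrow> ereal"
    and K :: "'a \<Rightarrow> 'b" and h :: "'a \<Rightarrow> real" and gradh :: "'a \<Rightarrow> 'a"
    and z x :: "nat \<Rightarrow> 'a" and w y :: "nat \<Rightarrow> 'b" and \<tau> \<sigma> :: "nat \<Rightarrow> real"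
    and xb :: 'a and wb yb yy :: 'b
  assumes f: "proper_fun f" "convex_efun f" "lsc_fun f"
    and g: "proper_fun g" "convex_efun g" "lsc_fun g"
    and K: "linear K"
    and h: "convex_on UNIV h" "\<And>u. (h has_derivative (\<lambda>d. gradh u \<bullet> d)) (at u)"
    and par: "\<beta> > 0" "1 < \<psi>" "\<psi>\<^sup>2 \<le> \<psi> + 1" "\<mu>' > 0"
    and alg: "pgrpda f gradh K g \<beta> \<psi> \<mu> \<mu>' \<tau>0 z x w y \<tau> \<sigma>"
    and sol: "(xb, wb, yb) \<in> Omega f gradh K g"
    and \<tau>: "\<And>k. \<tau> k > 0" "\<And>k. \<tau> (Suc k) \<le> \<tau> k"
    and n: "n \<ge> 1"
    and grad_step: "\<tau> n * norm (gradh (x n) - gradh (x (n - 1))) \<le> \<mu>' * norm (x n - x (n - 1))"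
    and K_step: "\<tau> (n + 1) * sqrt \<beta> * norm (K (x (n + 1)) - K (x n)) \<le> \<mu> * norm (x (n + 1) - x n)"
    and ratio: "(\<tau> n / \<tau> (n + 1) * \<mu>)\<^sup>2 \<le> \<psi> * (\<tau> n / \<tau> (n - 1)) - 2 * \<mu>'"
  shows "ereal (2 * \<tau> n) * JJ f h K g xb wb (x n) (w n) yy
      + ereal (\<psi> / (\<psi> - 1) * (norm (xb - z (n + 2)))\<^sup>2 + 1 / \<beta> * (norm (yy - y n))\<^sup>2
               + \<mu>' * (norm (x n - x (n + 1)))\<^sup>2)
    \<le> ereal (\<psi> / (\<psi> - 1) * (norm (xb - z (n + 1)))\<^sup>2 + 1 / \<beta> * (norm (yy - y (n - 1)))\<^sup>2
               + \<mu>' * (norm (x n - x (n - 1)))\<^sup>2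
               - \<psi> * (\<tau> n / \<tau> (n - 1)) * (norm (x n - z (n + 1)))\<^sup>2)"
proof -
  obtain k where k: "n = Suc k" using n by (cases n) auto
  have idx: "n - 1 = k" "n + 1 = Suc n" "n + 2 = Suc (Suc n)" using k by simp_all
  note step_n = pgrpda_SucD[OF alg, of k, folded k] and step_Sn = pgrpda_SucD[OF alg, of n]
  obtain Fxb Gwb where sol': "f xb = ereal Fxb" "g wb = ereal Gwb" "K xb = wb"
    using Omega_finite_values[OF sol] by blast
  obtain Fxn where Fxn: "f (x n) = ereal Fxn"
    and Fn: "\<And>u. ereal (Fxn + (z n - \<tau> k *\<^sub>R adjoint K (y k) - \<tau> k *\<^sub>R gradh (x k) - x n) \<bullet> (u - x n) / \<tau> k) \<le> f u"
    using prox_variational_inequality[OF f \<tau>(1) step_n(2)] by blast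
  obtain Fxn1 where Fxn1: "f (x (Suc n)) = ereal Fxn1"
    and FSn: "\<And>u. ereal (Fxn1 + (z (Suc n) - \<tau> n *\<^sub>R adjoint K (y n) - \<tau> n *\<^sub>R gradh (x n) - x (Suc n))
                          \<bullet> (u - x (Suc n)) / \<tau> n) \<le> f u"
    using prox_variational_inequality[OF f \<tau>(1) step_Sn(2)] by blast
  have "\<sigma> n > 0" using step_n(4) \<tau>(1) par(1) by simp
  then obtain Gwn where Gwn: "g (w n) = ereal Gwn" and Gn: "\<And>u. ereal (Gwn + y n \<bullet> (u - w n)) \<le> g u"
    using prox_dual_update_subgradient[OF g _ step_n(5,6)] by blast
  have K_step': "\<tau> n * sqrt \<beta> * norm (K (x (Suc n)) - K (x n))
      \<le> \<tau> n / \<tau> (Suc n) * \<mu> * norm (x (Suc n) - x n)"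
    using mult_left_mono[OF K_step[unfolded idx], of "\<tau> n / \<tau> (Suc n)"] \<tau>(1)[of n] \<tau>(1)[of "Suc n"]
    by (simp add: mult.assoc)
  have "2 * \<tau> n * (Fxn + h (x n) + Gwn + yy \<bullet> (K (x n) - w n) - Fxb - h xb - Gwb)
      + (\<psi> / (\<psi> - 1) * (norm (xb - z (Suc (Suc n))))\<^sup>2 + 1 / \<beta> * (norm (yy - y n))\<^sup>2
         + \<mu>' * (norm (x n - x (Suc n)))\<^sup>2)
    \<le> \<psi> / (\<psi> - 1) * (norm (xb - z (Suc n)))\<^sup>2 + 1 / \<beta> * (norm (yy - y k))\<^sup>2
      + \<mu>' * (norm (x n - x k))\<^sup>2 - \<psi> * (\<tau> n / \<tau> k) * (norm (x n - z (Suc n)))\<^sup>2"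
  proof (rule one_step_energy_estimate[OF K _ _ _ _ step_Sn(1) pgrpda_SucD(1)[OF alg, of "Suc n"]])
    show "Fxb \<ge> Fxn1 + (z (Suc n) - \<tau> n *\<^sub>R adjoint K (y n) - \<tau> n *\<^sub>R gradh (x n) - x (Suc n))
                        \<bullet> (xb - x (Suc n)) / \<tau> n"
      using FSn[of xb] sol'(1) by simp
    show "Fxn1 \<ge> Fxn + (z n - \<tau> k *\<^sub>R adjoint K (y k) - \<tau> k *\<^sub>R gradh (x k) - x n) \<bullet> (x (Suc n) - x n) / \<tau> k"
      using Fn[of "x (Suc n)"] Fxn1 by simp
    show "Gwb \<ge> Gwn + y n \<bullet> (wb - w n)" using Gn[of wb] sol'(2) by simp
    show "h xb \<ge> h (x n) + gradh (x n) \<bullet> (xb - x n)" by (rule convex_on_above_tangent[OF h])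
    show "y n = y k + (\<beta> * \<tau> n) *\<^sub>R (K (x n) - w n)" using step_n(4,6) by simp
  qed (use sol' par \<tau> k grad_step K_step' ratio idx in auto)
  then show ?thesis
    unfolding idx JJ_def Phi_def Fxn Gwn sol'(1,2) by (simp add: diff_diff_eq)
qed

theorem lemma3p1:
  fixes f :: "'a::euclidean_space \<Rightarrow> ereal"
    and g :: "'b::euclidean_space \<Rightarrow> ereal"
    and K :: "'a \<Rightarrow> 'b"
    and h :: "'a \<Rightarrow> real" and gradh :: "'a \<Rightarrow> 'a" and L :: real
    and \<beta> \<psi> \<mu> \<mu>' \<tau>0 :: real
    and z x :: "nat \<Rightarrow> 'a" and w y :: "nat \<Rightarrow> 'b" and \<tau> \<sigma> :: "nat \<Rightarrow> real"
    and xb :: 'a and wb yb :: 'b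
  assumes f: "proper_fun f" "convex_efun f" "lsc_fun f"
    and g: "proper_fun g" "convex_efun g" "lsc_fun g"
    and K: "linear K"
    and h: "convex_on UNIV h" "\<And>u. (h has_derivative (\<lambda>d. gradh u \<bullet> d)) (at u)"
      "\<And>u v. norm (gradh u - gradh v) \<le> L * norm (u - v)"
    and A1: "A1 f h K g"
    and par: "\<beta> > 0" "1 < \<psi>" "\<psi> \<le> (1 + sqrt 5) / 2" "0 < 2 * \<mu>'" "2 * \<mu>' < \<mu>" "\<mu> < \<psi> / 2"
      "\<tau>0 > 0"
    and alg: "pgrpda f gradh K g \<beta> \<psi> \<mu> \<mu>' \<tau>0 z x w y \<tau> \<sigma>"
    and sol: "(xb, wb, yb) \<in> Omega f gradh K g"
  shows "\<forall>yy. \<exists>n2. \<forall>n\<ge>n2.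
    ereal (2 * \<tau> n) * JJ f h K g xb wb (x n) (w n) yy
      + ereal (\<psi> / (\<psi> - 1) * (norm (xb - z (n + 2)))\<^sup>2 + 1 / \<beta> * (norm (yy - y n))\<^sup>2
               + \<mu>' * (norm (x n - x (n + 1)))\<^sup>2)
    \<le> ereal (\<psi> / (\<psi> - 1) * (norm (xb - z (n + 1)))\<^sup>2 + 1 / \<beta> * (norm (yy - y (n - 1)))\<^sup>2
               + \<mu>' * (norm (x n - x (n - 1)))\<^sup>2
               - \<psi> * (\<tau> n / \<tau> (n - 1)) * (norm (x n - z (n + 1)))\<^sup>2)"
proof -
  have \<mu>: "\<mu> > 0" "\<mu>' > 0" using par by auto
  note sizes = pgrpda_step_sizes[OF K h(3) par(1) \<mu> par(7) alg]
  obtain m where m: "m > 0" "\<And>k. m \<le> \<tau> k" using sizes(1) by blast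
  have \<tau>: "\<And>k. \<tau> k > 0" "decseq \<tau>"
    using m sizes(2) by (auto intro: less_le_trans decseq_SucI)
  have \<psi>: "\<psi>\<^sup>2 \<le> \<psi> + 1" using par by (intro sq_le_succ_if_le_golden_ratio) auto
  obtain N where N: "\<And>n. n \<ge> N \<Longrightarrow> (\<tau> n / \<tau> (n + 1) * \<mu>)\<^sup>2 \<le> \<psi> * (\<tau> n / \<tau> (n - 1)) - 2 * \<mu>'"
    using eventually_step_size_ratio_condition[OF \<tau>(2) m pgrpda_parameter_gap[OF par(3-6)]]
    unfolding eventually_sequentially by blast
  have grad_step: "\<tau> n * norm (gradh (x n) - gradh (x (n - 1))) \<le> \<mu>' * norm (x n - x (n - 1))"
    if "n \<ge> 1" for n
    using sizes(4)[of "n - 1"] that by simp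
  have K_step: "\<tau> (n + 1) * sqrt \<beta> * norm (K (x (n + 1)) - K (x n)) \<le> \<mu> * norm (x (n + 1) - x n)"
    for n
    using sizes(3)[of n] by simp
  show ?thesis
    by (intro allI exI[of _ "Suc N"] impI pgrpda_energy_inequality[OF f g K h(1,2) par(1,2) \<psi> \<mu>(2)
          alg sol \<tau>(1) sizes(2) _ grad_step K_step N]) auto
qed

end
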